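(* Let $\lambda>0$, $2<q<3$, let $\kappa$ be a constant with $2^{2-q}\le\kappa\le q2^{1-q}$, and let $h:\mathbb{R}\to[0,+\infty]$ be convex and $C^1$ on $(0,\infty)$ with $\lim_{t\to0^+}h(t)=+\infty$, $\liminf_{t\to\infty}h(t)/t>0$, $h(t)=+\infty$ for $t\le0$, and suppose $h'(\lambda^3)\ge0$. Define $\mathcal{F}_2(A)=(\kappa/2)|A-\lambda\mathbf{1}|^q+\lambda h'(\lambda^3)G(A)$. Then $\mathcal{F}_2(A)\ge0$ for all $A\in\mathbb{R}^{3\times3}$ provided $$\lambda h'(\lambda^3)\le\inf_{c_0>0}\left\{\frac{\kappa}{2}\max\left\{\frac{c_0^{q-2}}{M_2(\lambda,c_0)},\frac{c_0^{q-3}}{M_3(\lambda,c_0)}\right\}\right\}.$$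
   Context: For $A\in\mathbb{R}^{3\times3}$ let $\lambda_1(A),\lambda_2(A),\lambda_3(A)$ be its singular values, $P(A)=\sum_{1\le i<j\le3}\lambda_i(A)\lambda_j(A)-\lambda\sum_i\lambda_i(A)$, $N(A)=\operatorname{tr}\operatorname{cof}A-\lambda\operatorname{tr}A$ (cof the cofactor matrix), and $G(A)=P(A)-N(A)$. $|\cdot|$ is the Frobenius norm and $\mathbf{1}$ the identity. For $c_0>0$: $M_2(\lambda,c_0)=\sup\{|G(A)|/|A-\lambda\mathbf{1}|^2:\ |A-\lambda\mathbf{1}|\ge c_0\}$ and $M_3(\lambda,c_0)=\sup\{|G(A)|/|A-\lambda\mathbf{1}|^3:\ 0<|A-\lambda\mathbf{1}|<c_0\}$. *)

theory Defs
  imports "HOL-Analysis.Analysis"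
begin

text \<open>Cofactor matrix: entry (i,j) is the (i,j)-cofactor, i.e. the determinant of A with
  row i and column j cleared and a 1 put at position (i,j); this equals (-1)^(i+j) times the
  (i,j)-minor.\<close>
definition cof :: "real^'n^'n \<Rightarrow> real^'n^'n" where
  "cof A = (\<chi> i j. det (\<chi> k l. if k = i \<and> l = j then 1
                              else if k = i \<or> l = j then 0 else A$k$l))"

definition diag3 :: "real^3 \<Rightarrow> real^3^3" where
  "diag3 s = (\<chi> i j. if i = j then s$i else 0)"

definition is_sv :: "real^3^3 \<Rightarrow> real^3 \<Rightarrow> bool" where
  "is_sv A s \<longleftrightarrow> (\<forall>i. s$i \<ge> 0) \<and>
     (\<exists>U V. orthogonal_matrix U \<and> orthogonal_matrix V \<and> A = U ** diag3 s ** transpose V)"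

definition sv :: "real^3^3 \<Rightarrow> real^3" where
  "sv A = (SOME s. is_sv A s)"

definition Pfun :: "real \<Rightarrow> real^3^3 \<Rightarrow> real" where
  "Pfun lam A = (let s = sv A in
     s$1 * s$2 + s$1 * s$3 + s$2 * s$3 - lam * (s$1 + s$2 + s$3))"

definition Nfun :: "real \<Rightarrow> real^3^3 \<Rightarrow> real" where
  "Nfun lam A = trace (cof A) - lam * trace A"

definition Gfun :: "real \<Rightarrow> real^3^3 \<Rightarrow> real" where
  "Gfun lam A = Pfun lam A - Nfun lam A"

text \<open>Frobenius norm of A - lam*1 (the norm on real^3^3 is the Frobenius norm).\<close>
definition dist1 :: "real \<Rightarrow> real^3^3 \<Rightarrow> real" where
  "dist1 lam A = norm (A - mat lam)"

definition M2 :: "real \<Rightarrow> real \<Rightarrow> ereal" where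
  "M2 lam c0 = (SUP A \<in> {A. dist1 lam A \<ge> c0}. ereal (\<bar>Gfun lam A\<bar> / (dist1 lam A)^2))"

definition M3 :: "real \<Rightarrow> real \<Rightarrow> ereal" where
  "M3 lam c0 = (SUP A \<in> {A. 0 < dist1 lam A \<and> dist1 lam A < c0}.
                   ereal (\<bar>Gfun lam A\<bar> / (dist1 lam A)^3))"

definition convex_ext :: "(real \<Rightarrow> ereal) \<Rightarrow> bool" where
  "convex_ext h \<longleftrightarrow> (\<forall>x y u. 0 \<le> u \<and> u \<le> 1 \<longrightarrow>
      h ((1 - u) * x + u * y) \<le> ereal (1 - u) * h x + ereal u * h y)"

definition F2 :: "real \<Rightarrow> real \<Rightarrow> real \<Rightarrow> real \<Rightarrow> real^3^3 \<Rightarrow> real" where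
  "F2 kappa q lam dh A = kappa / 2 * (dist1 lam A) powr q + lam * dh * Gfun lam A"

end

theory Submission
  imports Defs
begin

(* For every c0 > 0 the bound on lam h'(lam^3) gives one of two estimates: either
   lam h'(lam^3) |G A| <= kappa/2 c0^(q-2) |A - lam 1|^2 wherever |A - lam 1| >= c0, or
   lam h'(lam^3) |G A| <= kappa/2 c0^(q-3) |A - lam 1|^3 wherever 0 < |A - lam 1| < c0.
   As q - 2 > 0 > q - 3, on the respective region the right-hand side is at most
   kappa/2 |A - lam 1|^q, so F2 is nonnegative there. Taking c0 = |B - lam 1|, either B itself
   or the punctured ball below it is covered, and continuity of F2 handles the sphere and the
   centre. G is continuous because P = (s^2 - |A|^2)/2 - lam s, where the sum s of the singular
   values is the maximum of trace (Q A) over orthogonal Q and hence Lipschitz. *)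

section \<open>Singular value decomposition\<close>

lemma inner_matrix_vector_transpose: "(y::real^'n) \<bullet> (A *v x) = (transpose A *v y) \<bullet> x"
  by (simp add: dot_lmul_matrix)

lemma norm_cross3_orthonormal:
  fixes x y :: "real^3"
  assumes "norm x = 1" "norm y = 1" "x \<bullet> y = 0"
  shows "norm (cross3 x y) = 1"
  using norm_cross_dot[of x y] assms norm_ge_zero[of "cross3 x y"] by (simp add: power2_eq_1_iff)

lemma orthogonal_orthonormal_pair_eq_cross3:
  fixes y1 y2 v :: "real^3"
  assumes "norm y1 = 1" "norm y2 = 1" "y1 \<bullet> y2 = 0" "v \<bullet> y1 = 0" "v \<bullet> y2 = 0"
  shows "v = (cross3 y1 y2 \<bullet> v) *\<^sub>R cross3 y1 y2"
proof -
  define n where "n = cross3 y1 y2"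
  have "cross3 n v = - cross3 v n" by (rule cross_skew)
  also have "\<dots> = 0" unfolding n_def Lagrange using assms by simp
  finally have "cross3 n (cross3 n v) = 0" by simp
  then have "(n \<bullet> v) *\<^sub>R n - (n \<bullet> n) *\<^sub>R v = 0" by (simp add: Lagrange)
  moreover have "n \<bullet> n = 1"
    using norm_cross3_orthonormal[OF assms(1-3)] by (simp add: n_def norm_eq_1)
  ultimately show ?thesis by (simp add: n_def)
qed

lemma exists_unit_orthogonal:
  fixes a :: "real^3" assumes "norm a = 1"
  obtains b where "norm b = 1" "b \<bullet> a = 0"
proof -
  obtain Q :: "real^3^3" where Q: "orthogonal_matrix Q" "Q *v axis 1 1 = a"
    using orthogonal_matrix_exists_basis[OF assms] by blast
  have ot: "orthogonal_transformation ((*v) Q)"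
    unfolding orthogonal_transformation_matrix using Q(1) by (simp add: matrix_vector_mul_linear)
  have "norm (Q *v axis 2 1) = norm (axis 2 1 :: real^3)"
    using ot orthogonal_transformation_norm by blast
  moreover have "(Q *v axis 2 1) \<bullet> a = axis 2 1 \<bullet> (axis 1 1 :: real^3)"
    unfolding Q(2)[symmetric] using ot orthogonal_transformation_def by blast
  ultimately show ?thesis using that by (auto simp: inner_axis_axis)
qed

lemma bilinear_form_attains_max:
  fixes A :: "real^3^3" and p q b c :: "real^3"
  assumes "norm b = 1" "norm c = 1" "b \<bullet> p = 0" "c \<bullet> q = 0"
  obtains x y where "norm x = 1" "norm y = 1" "x \<bullet> p = 0" "y \<bullet> q = 0"
    "\<And>x' y'. norm x' = 1 \<Longrightarrow> norm y' = 1 \<Longrightarrow> x' \<bullet> p = 0 \<Longrightarrow> y' \<bullet> q = 0 \<Longrightarrow>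
       y' \<bullet> (A *v x') \<le> y \<bullet> (A *v x)"
proof -
  define K where "K = (sphere 0 1 \<times> sphere 0 1) \<inter> {z :: (real^3) \<times> (real^3). fst z \<bullet> p = 0 \<and> snd z \<bullet> q = 0}"
  have "closed {z :: (real^3) \<times> (real^3). fst z \<bullet> p = 0 \<and> snd z \<bullet> q = 0}"
    by (intro closed_Collect_conj closed_Collect_eq continuous_intros)
  then have "compact K"
    unfolding K_def by (intro compact_Int_closed compact_Times compact_sphere)
  moreover have "(b, c) \<in> K" using assms by (simp add: K_def)
  moreover have "continuous_on K (\<lambda>z. snd z \<bullet> (A *v fst z))"
    by (intro continuous_intros matrix_vector_mul_bounded_linear[THEN bounded_linear.continuous_on])
  ultimately obtain z where z: "z \<in> K" "\<forall>z'\<in>K. snd z' \<bullet> (A *v fst z') \<le> snd z \<bullet> (A *v fst z)"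
    using continuous_attains_sup[of K] by blast
  show ?thesis
  proof (rule that[of "fst z" "snd z"])
    fix x' y' :: "real^3"
    assume "norm x' = 1" "norm y' = 1" "x' \<bullet> p = 0" "y' \<bullet> q = 0"
    then have "(x', y') \<in> K" by (simp add: K_def)
    then show "y' \<bullet> (A *v x') \<le> snd z \<bullet> (A *v fst z)" using z(2) by fastforce
  qed (use z(1) in \<open>auto simp: K_def\<close>)
qed

text \<open>Perturbing a constrained maximiser towards A x0 resp. transpose A y0 (admissible by the
  orthogonality hypotheses) shows, via equality in Cauchy-Schwarz, that it is a singular pair.\<close>
lemma max_bilinear_form_singular_pair:
  fixes A :: "real^3^3" and x0 y0 p q :: "real^3"
  assumes nx: "norm x0 = 1" and ny: "norm y0 = 1"
    and vq: "(A *v x0) \<bullet> q = 0" and wp: "(transpose A *v y0) \<bullet> p = 0"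
    and x0p: "x0 \<bullet> p = 0" and y0q: "y0 \<bullet> q = 0"
    and max: "\<And>x y. norm x = 1 \<Longrightarrow> norm y = 1 \<Longrightarrow> x \<bullet> p = 0 \<Longrightarrow> y \<bullet> q = 0 \<Longrightarrow>
      y \<bullet> (A *v x) \<le> y0 \<bullet> (A *v x0)"
  shows "A *v x0 = (y0 \<bullet> (A *v x0)) *\<^sub>R y0" "transpose A *v y0 = (y0 \<bullet> (A *v x0)) *\<^sub>R x0"
    "y0 \<bullet> (A *v x0) \<ge> 0"
proof -
  define s where "s = y0 \<bullet> (A *v x0)"
  define v where "v = A *v x0"
  define w where "w = transpose A *v y0"
  have sw: "s = w \<bullet> x0" unfolding s_def w_def by (rule inner_matrix_vector_transpose)
  show "A *v x0 = s *\<^sub>R y0"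
  proof (cases "v = 0")
    case True then show ?thesis unfolding s_def v_def[symmetric] by simp
  next
    case False
    define y where "y = (1 / norm v) *\<^sub>R v"
    have "norm y = 1" "y \<bullet> q = 0" using False vq by (simp_all add: y_def v_def)
    then have "y \<bullet> v \<le> s" using max nx x0p unfolding s_def v_def by blast
    moreover have "y \<bullet> v = norm v"
      using False by (simp add: y_def power2_norm_eq_inner[symmetric] power2_eq_square)
    moreover have "s \<le> norm v"
      unfolding s_def v_def[symmetric] using norm_cauchy_schwarz[of y0 v] ny by simp
    ultimately have "s = norm v" by simp
    then have "y0 \<bullet> v = norm y0 * norm v" using ny by (simp add: s_def v_def)
    then have "norm y0 *\<^sub>R v = norm v *\<^sub>R y0" by (simp add: norm_cauchy_schwarz_eq)
    then show ?thesis using ny \<open>s = norm v\<close> by (simp add: v_def)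
  qed
  show "transpose A *v y0 = s *\<^sub>R x0"
  proof (cases "w = 0")
    case True then show ?thesis using sw w_def by simp
  next
    case False
    define x where "x = (1 / norm w) *\<^sub>R w"
    have "norm x = 1" "x \<bullet> p = 0" using False wp by (simp_all add: x_def w_def)
    then have "y0 \<bullet> (A *v x) \<le> s" using max ny y0q unfolding s_def by blast
    moreover have "y0 \<bullet> (A *v x) = w \<bullet> x" using inner_matrix_vector_transpose w_def by simp
    moreover have "w \<bullet> x = norm w"
      using False by (simp add: x_def power2_norm_eq_inner[symmetric] power2_eq_square)
    moreover have "s \<le> norm w" unfolding sw using norm_cauchy_schwarz[of w x0] nx by simp
    ultimately have "s = norm w" by simp
    then have "x0 \<bullet> w = norm x0 * norm w" using nx sw by (simp add: inner_commute)
    then have "norm x0 *\<^sub>R w = norm w *\<^sub>R x0" by (simp add: norm_cauchy_schwarz_eq)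
    then show ?thesis using nx \<open>s = norm w\<close> by (simp add: w_def)
  qed
  have "(- y0) \<bullet> (A *v x0) \<le> s" using max[of x0 "- y0"] nx ny x0p y0q unfolding s_def by simp
  then show "s \<ge> 0" unfolding s_def by simp
qed

lemma is_sv_of_orthonormal_pairs:
  fixes A :: "real^3^3" and x y :: "3 \<Rightarrow> real^3" and s :: "real^3"
  assumes nx: "\<And>j. norm (x j) = 1" and ny: "\<And>j. norm (y j) = 1"
    and ox: "\<And>i j. i \<noteq> j \<Longrightarrow> orthogonal (x i) (x j)"
    and oy: "\<And>i j. i \<noteq> j \<Longrightarrow> orthogonal (y i) (y j)"
    and s: "\<And>j. s $ j \<ge> 0" and Ax: "\<And>j. A *v x j = s $ j *\<^sub>R y j"
  shows "is_sv A s"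
proof -
  define U where "U = (\<chi> i j. y j $ i :: real^3^3)"
  define V where "V = (\<chi> i j. x j $ i :: real^3^3)"
  have oU: "orthogonal_matrix U" and oV: "orthogonal_matrix V"
    unfolding orthogonal_matrix_orthonormal_columns U_def V_def column_def
    using nx ny ox oy by (simp_all add: vec_eq_iff)
  have "(A ** V) $ i $ j = (U ** diag3 s) $ i $ j" for i j
  proof -
    have "(A ** V) $ i $ j = (A *v x j) $ i"
      by (simp add: matrix_matrix_mult_def matrix_vector_mult_def V_def)
    also have "\<dots> = s $ j * y j $ i" using Ax by simp
    also have "\<dots> = (U ** diag3 s) $ i $ j"
      by (simp add: matrix_matrix_mult_def U_def diag3_def if_distrib cong: if_cong)
    finally show ?thesis .
  qed
  then have AV: "A ** V = U ** diag3 s" by (simp add: vec_eq_iff)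
  have "A = A ** (V ** transpose V)" using oV by (simp add: orthogonal_matrix_def)
  also have "\<dots> = U ** diag3 s ** transpose V" by (simp add: matrix_mul_assoc AV)
  finally show ?thesis unfolding is_sv_def using oU oV s by blast
qed

text \<open>Maximise y \<bullet> A x over pairs of unit vectors, then again on the
  orthogonal complements of the maximiser; the third pair is completed by cross products.\<close>
lemma is_sv_exists: "\<exists>s. is_sv A s"
proof -
  obtain x1 y1 where nx1: "norm x1 = 1" and ny1: "norm y1 = 1"
    and max1: "\<And>x y. norm x = 1 \<Longrightarrow> norm y = 1 \<Longrightarrow> y \<bullet> (A *v x) \<le> y1 \<bullet> (A *v x1)"
    using bilinear_form_attains_max[of "axis 1 1" "axis 1 1" 0 0 A] by auto
  define s1 where "s1 = y1 \<bullet> (A *v x1)"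
  have Ax1: "A *v x1 = s1 *\<^sub>R y1" and Aty1: "transpose A *v y1 = s1 *\<^sub>R x1" and s1: "s1 \<ge> 0"
    using max_bilinear_form_singular_pair[of x1 y1 A 0 0] nx1 ny1 max1 unfolding s1_def by auto
  obtain b c where "norm b = 1" "b \<bullet> x1 = 0" "norm c = 1" "c \<bullet> y1 = 0"
    using exists_unit_orthogonal nx1 ny1 by metis
  then obtain x2 y2 where nx2: "norm x2 = 1" and ny2: "norm y2 = 1"
    and x21: "x2 \<bullet> x1 = 0" and y21: "y2 \<bullet> y1 = 0"
    and max2: "\<And>x y. norm x = 1 \<Longrightarrow> norm y = 1 \<Longrightarrow> x \<bullet> x1 = 0 \<Longrightarrow> y \<bullet> y1 = 0 \<Longrightarrow>
      y \<bullet> (A *v x) \<le> y2 \<bullet> (A *v x2)"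
    using bilinear_form_attains_max[of b c x1 y1 A] by blast
  have "(A *v x2) \<bullet> y1 = 0"
    using Aty1 x21 by (simp add: inner_commute inner_matrix_vector_transpose)
  moreover have "(transpose A *v y2) \<bullet> x1 = 0"
    using inner_matrix_vector_transpose[of y2 A x1] Ax1 y21 by (simp add: inner_commute)
  moreover define s2 where "s2 = y2 \<bullet> (A *v x2)"
  ultimately have Ax2: "A *v x2 = s2 *\<^sub>R y2" and Aty2: "transpose A *v y2 = s2 *\<^sub>R x2"
    and s2: "s2 \<ge> 0"
    using max_bilinear_form_singular_pair[of x2 y2 A y1 x1] nx2 ny2 x21 y21 max2
    unfolding s2_def by auto
  define x3 where "x3 = cross3 x1 x2"
  have nx3: "norm x3 = 1"
    unfolding x3_def using nx1 nx2 x21 by (simp add: norm_cross3_orthonormal inner_commute)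
  have x31: "x3 \<bullet> x1 = 0" and x32: "x3 \<bullet> x2 = 0"
    unfolding x3_def by (simp_all add: dot_cross_self inner_commute)
  have "(A *v x3) \<bullet> y1 = 0" "(A *v x3) \<bullet> y2 = 0"
    using Aty1 Aty2 x31 x32 by (simp_all add: inner_commute inner_matrix_vector_transpose)
  then have Ax3: "A *v x3 = (cross3 y1 y2 \<bullet> (A *v x3)) *\<^sub>R cross3 y1 y2"
    by (intro orthogonal_orthonormal_pair_eq_cross3) (use ny1 ny2 y21 in \<open>simp_all add: inner_commute\<close>)
  define n where "n = cross3 y1 y2"
  define y3 where "y3 = (if 0 \<le> n \<bullet> (A *v x3) then n else - n)"
  define s3 where "s3 = \<bar>n \<bullet> (A *v x3)\<bar>"
  have Ax3': "A *v x3 = s3 *\<^sub>R y3"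
    using Ax3 unfolding n_def[symmetric] by (auto simp: y3_def s3_def)
  have ny3: "norm y3 = 1"
    using ny1 ny2 y21 by (simp add: y3_def n_def norm_cross3_orthonormal inner_commute)
  have y31: "y3 \<bullet> y1 = 0" and y32: "y3 \<bullet> y2 = 0"
    by (simp_all add: y3_def n_def dot_cross_self inner_commute)
  define x where "x = (\<lambda>j::3. if j = 1 then x1 else if j = 2 then x2 else x3)"
  define y where "y = (\<lambda>j::3. if j = 1 then y1 else if j = 2 then y2 else y3)"
  have "is_sv A (vector [s1, s2, s3])"
  proof (rule is_sv_of_orthonormal_pairs[of x y])
    fix i j :: 3
    show "norm (x j) = 1" "norm (y j) = 1"
      using exhaust_3[of j] nx1 nx2 nx3 ny1 ny2 ny3 by (auto simp: x_def y_def)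
    show "vector [s1, s2, s3] $ j \<ge> 0"
      using exhaust_3[of j] s1 s2 by (auto simp: s3_def)
    show "A *v x j = vector [s1, s2, s3] $ j *\<^sub>R y j"
      using exhaust_3[of j] Ax1 Ax2 Ax3' by (auto simp: x_def y_def)
    assume "i \<noteq> j"
    then show "orthogonal (x i) (x j)" "orthogonal (y i) (y j)"
      using exhaust_3[of i] exhaust_3[of j] x21 x31 x32 y21 y31 y32
      by (auto simp: x_def y_def orthogonal_def inner_commute)
  qed
  then show ?thesis by blast
qed

lemma is_sv_sv: "is_sv A (sv A)"
  unfolding sv_def by (rule someI_ex, rule is_sv_exists)

section \<open>Continuity of G\<close>

lemma orthogonal_matrix_abs_entry_le:
  assumes "orthogonal_matrix (W :: real^'n^'n)" shows "\<bar>W $ i $ j\<bar> \<le> 1"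
proof -
  have "norm (row i W) = 1" using assms orthogonal_matrix_orthonormal_rows by blast
  moreover have "row i W = W $ i" by (simp add: row_def vec_eq_iff)
  ultimately show ?thesis using component_le_norm_cart[of "W $ i" j] by simp
qed

lemma trace_mult_diag3: "trace (W ** diag3 s) = W$1$1 * s$1 + W$2$2 * s$2 + W$3$3 * s$3"
  by (simp add: trace_def matrix_matrix_mult_def diag3_def if_distrib sum_3 cong: if_cong)

lemma trace_orthogonal_conj:
  assumes "orthogonal_matrix (V :: real^'n^'n)"
  shows "trace (V ** X ** transpose V) = trace X"
proof -
  have "trace (V ** X ** transpose V) = trace (transpose V ** (V ** X))" by (rule trace_mul_sym)
  also have "\<dots> = trace ((transpose V ** V) ** X)" by (simp only: matrix_mul_assoc)
  also have "\<dots> = trace X" using assms by (simp add: orthogonal_matrix_def)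
  finally show ?thesis .
qed

lemma trace_orthogonal_mult_le_sv:
  assumes "is_sv A s" "orthogonal_matrix Q"
  shows "trace (Q ** A) \<le> s$1 + s$2 + s$3"
proof -
  obtain U V where UV: "orthogonal_matrix U" "orthogonal_matrix V" "A = U ** diag3 s ** transpose V"
    and s: "\<forall>i. s$i \<ge> 0" using assms(1) unfolding is_sv_def by blast
  define W where "W = transpose V ** Q ** U"
  have oW: "orthogonal_matrix W" unfolding W_def using UV assms(2)
    by (simp add: orthogonal_matrix_mul)
  have "trace (Q ** A) = trace ((Q ** U ** diag3 s) ** transpose V)"
    using UV(3) by (simp add: matrix_mul_assoc)
  also have "\<dots> = trace (W ** diag3 s)"
    unfolding trace_mul_sym[of _ "transpose V"] by (simp add: W_def matrix_mul_assoc)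
  also have "\<dots> = W$1$1 * s$1 + W$2$2 * s$2 + W$3$3 * s$3" by (rule trace_mult_diag3)
  also have "\<dots> \<le> s$1 + s$2 + s$3"
  proof -
    have "W$i$i * s$i \<le> s$i" for i
      using mult_right_mono[of "W$i$i" 1 "s$i"] orthogonal_matrix_abs_entry_le[OF oW, of i i] s
      by auto
    then show ?thesis by (simp add: add_mono)
  qed
  finally show ?thesis .
qed

lemma exists_orthogonal_trace_mult_eq_sv:
  assumes "is_sv A s"
  obtains Q where "orthogonal_matrix Q" "trace (Q ** A) = s$1 + s$2 + s$3"
proof -
  obtain U V where UV: "orthogonal_matrix U" "orthogonal_matrix V" "A = U ** diag3 s ** transpose V"
    using assms(1) unfolding is_sv_def by blast
  define Q where "Q = V ** transpose U"
  have "Q ** A = V ** (transpose U ** U) ** diag3 s ** transpose V"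
    using UV(3) by (simp add: Q_def matrix_mul_assoc)
  also have "\<dots> = V ** diag3 s ** transpose V" using UV(1) by (simp add: orthogonal_matrix_def)
  finally have "trace (Q ** A) = trace (diag3 s)" using trace_orthogonal_conj[OF UV(2)] by simp
  also have "\<dots> = s$1 + s$2 + s$3" by (simp add: trace_def diag3_def sum_3)
  finally have "trace (Q ** A) = s$1 + s$2 + s$3" .
  moreover have "orthogonal_matrix Q" using UV by (simp add: Q_def orthogonal_matrix_mul)
  ultimately show ?thesis using that by blast
qed

lemma abs_trace_orthogonal_mult_le:
  assumes "orthogonal_matrix (Q :: real^3^3)"
  shows "\<bar>trace (Q ** M)\<bar> \<le> 9 * norm M"
proof -
  have entry: "\<bar>Q$i$k * M$k$i\<bar> \<le> norm M" for i k
  proof -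
    have "\<bar>M$k$i\<bar> \<le> norm M"
      using order_trans[OF component_le_norm_cart Finite_Cartesian_Product.norm_nth_le] by blast
    then show ?thesis using orthogonal_matrix_abs_entry_le[OF assms, of i k]
      mult_mono[of "\<bar>Q$i$k\<bar>" 1 "\<bar>M$k$i\<bar>" "norm M"] by (simp add: abs_mult)
  qed
  have "\<bar>trace (Q ** M)\<bar> = \<bar>\<Sum>i\<in>UNIV. \<Sum>k\<in>UNIV. Q$i$k * M$k$i\<bar>"
    by (simp add: trace_def matrix_matrix_mult_def)
  also have "\<dots> \<le> (\<Sum>i\<in>(UNIV::3 set). \<Sum>k\<in>(UNIV::3 set). norm M)"
    by (intro order_trans[OF sum_abs] sum_mono order_trans[OF sum_abs]) (use entry in auto)
  also have "\<dots> = 9 * norm M" by simp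
  finally show ?thesis .
qed

definition sv_sum :: "real^3^3 \<Rightarrow> real" where
  "sv_sum A = sv A $ 1 + sv A $ 2 + sv A $ 3"

text \<open>The sum of singular values is the maximum of trace (Q ** A) over orthogonal Q; as a maximum
  of uniformly Lipschitz linear functions it is Lipschitz.\<close>
lemma sv_sum_diff_le: "sv_sum A - sv_sum B \<le> 9 * norm (A - B)"
proof -
  obtain Q where Q: "orthogonal_matrix Q" "trace (Q ** A) = sv_sum A"
    using exists_orthogonal_trace_mult_eq_sv[OF is_sv_sv[of A]] unfolding sv_sum_def by blast
  have "trace (Q ** B) \<le> sv_sum B"
    using trace_orthogonal_mult_le_sv[OF is_sv_sv Q(1)] unfolding sv_sum_def .
  moreover have "trace (Q ** A) = trace (Q ** B) + trace (Q ** (A - B))"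
    by (metis add_diff_cancel_left' diff_add_cancel matrix_add_ldistrib trace_add)
  moreover have "trace (Q ** (A - B)) \<le> 9 * norm (A - B)"
    using abs_trace_orthogonal_mult_le[OF Q(1), of "A - B"] by simp
  ultimately show ?thesis using Q(2) by simp
qed

lemma continuous_on_sv_sum: "continuous_on S sv_sum"
proof -
  have "9-lipschitz_on UNIV sv_sum"
  proof (rule lipschitz_onI)
    fix x y :: "real^3^3"
    show "dist (sv_sum x) (sv_sum y) \<le> 9 * dist x y"
      using sv_sum_diff_le[of x y] sv_sum_diff_le[of y x]
      by (simp add: dist_real_def dist_norm norm_minus_commute)
  qed simp
  then show ?thesis using lipschitz_on_continuous_on continuous_on_subset by blast
qed

lemma norm_power2_eq_trace: "(norm (A :: real^3^3))\<^sup>2 = trace (transpose A ** A)"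
  by (simp add: power2_norm_eq_inner inner_vec_def trace_def matrix_matrix_mult_def transpose_def
      sum_3 algebra_simps)

lemma is_sv_sum_squares:
  assumes "is_sv A s" shows "s$1^2 + s$2^2 + s$3^2 = (norm A)\<^sup>2"
proof -
  obtain U V where UV: "orthogonal_matrix U" "orthogonal_matrix V" "A = U ** diag3 s ** transpose V"
    using assms(1) unfolding is_sv_def by blast
  have "transpose (diag3 s) = diag3 s" by (simp add: diag3_def transpose_def vec_eq_iff)
  then have "transpose A ** A = V ** diag3 s ** (transpose U ** U) ** diag3 s ** transpose V"
    using UV(3) by (simp add: matrix_transpose_mul matrix_mul_assoc)
  also have "\<dots> = V ** (diag3 s ** diag3 s) ** transpose V"
    using UV(1) by (simp add: orthogonal_matrix_def matrix_mul_assoc)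
  finally have "trace (transpose A ** A) = trace (diag3 s ** diag3 s)"
    using trace_orthogonal_conj[OF UV(2)] by simp
  also have "\<dots> = s$1^2 + s$2^2 + s$3^2"
    by (simp add: trace_mult_diag3) (simp add: diag3_def power2_eq_square)
  finally show ?thesis using norm_power2_eq_trace by simp
qed

lemma Pfun_eq_sv_sum: "Pfun lam A = ((sv_sum A)\<^sup>2 - (norm A)\<^sup>2) / 2 - lam * sv_sum A"
  using is_sv_sum_squares[OF is_sv_sv[of A]] unfolding Pfun_def sv_sum_def Let_def
  by (simp add: power2_eq_square field_simps)

lemma trace_cof_3: "trace (cof (A :: real^3^3)) =
    A$2$2*A$3$3 - A$2$3*A$3$2 + A$1$1*A$3$3 - A$1$3*A$3$1 + A$1$1*A$2$2 - A$1$2*A$2$1"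
  by (simp add: trace_def sum_3 cof_def det_3)

lemma Gfun_eq: "Gfun lam A = ((sv_sum A)\<^sup>2 - (norm A)\<^sup>2) / 2 - lam * sv_sum A
    - (A$2$2*A$3$3 - A$2$3*A$3$2 + A$1$1*A$3$3 - A$1$3*A$3$1 + A$1$1*A$2$2 - A$1$2*A$2$1)
    + lam * (A$1$1 + A$2$2 + A$3$3)"
  unfolding Gfun_def Pfun_eq_sv_sum Nfun_def trace_cof_3 by (simp add: trace_def sum_3)

lemma continuous_on_Gfun: "continuous_on S (Gfun lam)"
  unfolding Gfun_eq[abs_def] by (intro continuous_intros continuous_on_sv_sum) auto

lemma continuous_on_F2:
  assumes "q > 0" shows "continuous_on S (F2 kappa q lam dh)"
  unfolding F2_def[abs_def] dist1_def
  by (intro continuous_intros continuous_on_powr' continuous_on_Gfun) (use assms in auto)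

section \<open>Nonnegativity of F2\<close>

lemma mult_le_of_ereal_le_div_bound:
  fixes a k e w g :: real and M :: ereal
  assumes a: "a \<ge> 0" and k: "k > 0" and e: "e > 0" and w: "w > 0" and g: "g \<ge> 0"
    and le: "ereal a \<le> ereal k * (ereal e / M)" and M: "ereal (g / w) \<le> M"
  shows "a * g \<le> k * e * w"
proof (cases M)
  case (real m)
  have "0 \<le> g / w" "g / w \<le> m" using M real g w by simp_all
  then have gm: "g \<le> m * w" and "0 \<le> m" using w by (simp add: divide_le_eq, linarith)
  show ?thesis
  proof (cases "m = 0")
    case True
    then show ?thesis using gm g k e w by simp
  next
    case False
    then have "m > 0" using \<open>0 \<le> m\<close> by simp
    then have "a \<le> k * (e / m)" using le real by (simp add: ereal_divide)
    then have "a * g \<le> (k * (e / m)) * (m * w)" using a g gm by (intro mult_mono) auto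
    also have "\<dots> = k * e * w" using \<open>m > 0\<close> by (simp add: field_simps)
    finally show ?thesis .
  qed
next
  case PInf
  then show ?thesis using le a k e w by simp
next
  case MInf
  then show ?thesis using M by simp
qed

lemma F2_nonneg_of_ratio_bound:
  fixes q :: real and p :: nat
  assumes a: "0 \<le> lam * dh" and k: "kappa > 0" and c: "c > 0" and r: "0 < dist1 lam A"
    and le: "ereal (lam * dh) \<le> ereal (kappa / 2) * (ereal (c powr (q - p)) / M)"
    and M: "ereal (\<bar>Gfun lam A\<bar> / dist1 lam A ^ p) \<le> M"
    and c0_r: "c powr (q - p) \<le> dist1 lam A powr (q - p)"
  shows "0 \<le> F2 kappa q lam dh A"
proof -
  define r where "r = dist1 lam A"
  have "lam * dh * \<bar>Gfun lam A\<bar> \<le> kappa / 2 * c powr (q - p) * r ^ p"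
    using mult_le_of_ereal_le_div_bound[OF a _ _ _ _ le] M k c r by (simp add: r_def)
  also have "\<dots> \<le> kappa / 2 * r powr (q - p) * r ^ p"
    using k c0_r r by (intro mult_left_mono mult_right_mono) (auto simp: r_def)
  also have "\<dots> = kappa / 2 * r powr q"
    using r by (simp add: r_def powr_realpow[symmetric] mult.assoc flip: powr_add)
  finally have "lam * dh * \<bar>Gfun lam A\<bar> \<le> kappa / 2 * r powr q" .
  moreover have "- (lam * dh * \<bar>Gfun lam A\<bar>) \<le> lam * dh * Gfun lam A"
    using a by (metis abs_ge_minus_self abs_mult abs_of_nonneg minus_le_iff)
  ultimately show ?thesis unfolding F2_def r_def by linarith
qed

lemma F2_nonneg_outside_or_inside:
  assumes a: "0 \<le> lam * dh" and k: "kappa > 0" and q: "2 < q" "q < 3" and c0: "c0 > 0"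
    and le: "ereal (lam * dh) \<le> ereal (kappa / 2) *
      max (ereal (c0 powr (q - 2)) / M2 lam c0) (ereal (c0 powr (q - 3)) / M3 lam c0)"
  shows "(\<forall>A. c0 \<le> dist1 lam A \<longrightarrow> 0 \<le> F2 kappa q lam dh A) \<or>
    (\<forall>A. 0 < dist1 lam A \<and> dist1 lam A < c0 \<longrightarrow> 0 \<le> F2 kappa q lam dh A)"
proof -
  have "ereal (lam * dh) \<le> ereal (kappa / 2) * (ereal (c0 powr (q - 2)) / M2 lam c0) \<or>
        ereal (lam * dh) \<le> ereal (kappa / 2) * (ereal (c0 powr (q - 3)) / M3 lam c0)"
    using le by (auto simp: max_def split: if_splits)
  then show ?thesis
  proof (elim disjE)
    assume le2: "ereal (lam * dh) \<le> ereal (kappa / 2) * (ereal (c0 powr (q - 2)) / M2 lam c0)"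
    have "0 \<le> F2 kappa q lam dh A" if "c0 \<le> dist1 lam A" for A
    proof (rule F2_nonneg_of_ratio_bound[where c = c0 and p = 2])
      show "ereal (\<bar>Gfun lam A\<bar> / dist1 lam A ^ 2) \<le> M2 lam c0"
        unfolding M2_def using that by (intro SUP_upper) auto
      show "c0 powr (q - real 2) \<le> dist1 lam A powr (q - real 2)"
        using that c0 q by (intro powr_mono2) auto
    qed (use a k c0 le2 that in auto)
    then show ?thesis by blast
  next
    assume le3: "ereal (lam * dh) \<le> ereal (kappa / 2) * (ereal (c0 powr (q - 3)) / M3 lam c0)"
    have "0 \<le> F2 kappa q lam dh A" if "0 < dist1 lam A \<and> dist1 lam A < c0" for A
    proof (rule F2_nonneg_of_ratio_bound[where c = c0 and p = 3])
      show "ereal (\<bar>Gfun lam A\<bar> / dist1 lam A ^ 3) \<le> M3 lam c0"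
        unfolding M3_def using that by (intro SUP_upper) auto
      show "c0 powr (q - real 3) \<le> dist1 lam A powr (q - real 3)"
        using that q by (intro powr_mono2') auto
    qed (use a k c0 le3 that in auto)
    then show ?thesis by blast
  qed
qed

lemma continuous_nonneg_on_punctured_ball_imp_cball:
  fixes f :: "'a :: {real_normed_vector, perfect_space} \<Rightarrow> real"
  assumes f: "continuous_on UNIV f" and r: "0 < r"
    and nonneg: "\<And>x. x \<in> ball c r - {c} \<Longrightarrow> 0 \<le> f x" and y: "y \<in> cball c r"
  shows "0 \<le> f y"
proof (rule continuous_ge_on_closure[of "ball c r - {c}"])
  have "y islimpt ball c r" using islimpt_ball r y by blast
  then have "y islimpt ball c r - {c}"
    using islimpt_insert[of y c "ball c r - {c}"] by (simp add: insert_absorb r)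
  then show "y \<in> closure (ball c r - {c})" by (simp add: closure_def)
  show "continuous_on (closure (ball c r - {c})) f" using f by (rule continuous_on_subset) simp
qed (use nonneg in simp)

lemma dist1_eq_dist: "dist1 lam A = dist (mat lam) A"
  by (simp add: dist1_def dist_norm norm_minus_commute)

theorem lemma3p2:
  fixes lam q kappa :: real and h :: "real \<Rightarrow> ereal"
  assumes lam_pos: "lam > 0"
    and q: "2 < q" "q < 3"
    and kappa: "2 powr (2 - q) \<le> kappa" "kappa \<le> q * 2 powr (1 - q)"
    and h_nonneg: "\<forall>t. h t \<ge> 0"
    and h_convex: "convex_ext h"
    and h_finite: "\<forall>t>0. h t < \<infinity>"
    and h_C1: "(\<lambda>t. real_of_ereal (h t)) C1_differentiable_on {0<..}"
    and h_lim0: "(h \<longlongrightarrow> \<infinity>) (at_right 0)"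
    and h_liminf: "Liminf at_top (\<lambda>t. h t / ereal t) > 0"
    and h_neg: "\<forall>t\<le>0. h t = \<infinity>"
    and h_deriv: "deriv (\<lambda>t. real_of_ereal (h t)) (lam ^ 3) \<ge> 0"
    and bound: "ereal (lam * deriv (\<lambda>t. real_of_ereal (h t)) (lam ^ 3))
       \<le> (INF c0 \<in> {0<..}. ereal (kappa / 2) *
             max (ereal (c0 powr (q - 2)) / M2 lam c0) (ereal (c0 powr (q - 3)) / M3 lam c0))"
  shows "\<forall>A :: real^3^3. F2 kappa q lam (deriv (\<lambda>t. real_of_ereal (h t)) (lam ^ 3)) A \<ge> 0"
proof -
  define dh where "dh = deriv (\<lambda>t. real_of_ereal (h t)) (lam ^ 3)"
  have a: "0 \<le> lam * dh" using lam_pos h_deriv by (simp add: dh_def)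
  have k: "kappa > 0" using kappa(1) by (smt (verit) powr_gt_zero)
  have cont: "continuous_on UNIV (F2 kappa q lam dh)" using q by (simp add: continuous_on_F2)
  have dichotomy: "(\<forall>A. c0 \<le> dist1 lam A \<longrightarrow> 0 \<le> F2 kappa q lam dh A) \<or>
      (\<forall>A. 0 < dist1 lam A \<and> dist1 lam A < c0 \<longrightarrow> 0 \<le> F2 kappa q lam dh A)" if "c0 > 0" for c0
    using F2_nonneg_outside_or_inside[OF a k q that] bound INF_lower[of c0 "{0<..}"] that
    unfolding dh_def by (meson greaterThan_iff order_trans)
  have off_centre: "0 \<le> F2 kappa q lam dh B" if "0 < dist1 lam B" for B
    using dichotomy[OF that]
  proof
    assume "\<forall>A. 0 < dist1 lam A \<and> dist1 lam A < dist1 lam B \<longrightarrow> 0 \<le> F2 kappa q lam dh A"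
    then show ?thesis
      using continuous_nonneg_on_punctured_ball_imp_cball[OF cont that, of "mat lam" B]
      by (force simp: dist1_eq_dist)
  qed auto
  have "0 \<le> F2 kappa q lam dh A" for A
  proof (cases "0 < dist1 lam A")
    case False
    then show ?thesis
      using continuous_nonneg_on_punctured_ball_imp_cball[OF cont zero_less_one, of "mat lam" A]
        off_centre by (force simp: dist1_eq_dist)
  qed (rule off_centre)
  then show ?thesis unfolding dh_def by blast
qed

end
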